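(* For $n=2$ (so $d_2=\frac34$), $\lim_{h\to3/4}\tilde B_2(h)=\frac35$, and consequently the limit wave speed $c_0(h)=\frac{1}{1-\tilde B_2(h)}$ satisfies $\lim_{h\to3/4}c_0(h)=\frac52$.
   Context: For $n=2$: $W(u)=\frac{u^2}{2}-\frac{u^4}{12}$, $H(u,v)=\frac{v^2}{2}+W(u)$; for $h\in(0,\frac34)$, $\Gamma_h$ is the periodic orbit in $\{H=h\}$ surrounding the origin of $u'=v$, $v'=-u+\frac13u^3$, oriented clockwise; $\tilde B_2(h)=\oint_{\Gamma_h}u^2v\,du\big/\oint_{\Gamma_h}v\,du$. *)

theory Defs
  imports "HOL-Analysis.Analysis"
begin

definition W2 :: "real \<Rightarrow> real" where
  "W2 u = u^2 / 2 - u^4 / 12"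

definition H2 :: "real \<Rightarrow> real \<Rightarrow> real" where
  "H2 u v = v^2 / 2 + W2 u"

definition field2 :: "real \<times> real \<Rightarrow> real \<times> real" where
  "field2 p = (snd p, - fst p + (fst p)^3 / 3)"

text \<open>A time parametrisation of the periodic orbit Gamma_h: the solution of the
  ODE through the point (0, sqrt(2h)) of the oval {H = h} around the origin,
  T-periodic with minimal period T. The flow direction is clockwise.\<close>
definition periodic_orbit2 :: "real \<Rightarrow> real \<Rightarrow> (real \<Rightarrow> real \<times> real) \<Rightarrow> bool" where
  "periodic_orbit2 h T g \<longleftrightarrow>
     T > 0 \<and> g 0 = (0, sqrt (2 * h)) \<and>
     (\<forall>t. (g has_vector_derivative field2 (g t)) (at t)) \<and>
     (\<forall>t. g (t + T) = g t) \<and>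
     (\<forall>t\<in>{0<..<T}. g t \<noteq> g 0)"

definition line_int_du :: "(real \<Rightarrow> real \<Rightarrow> real) \<Rightarrow> real \<Rightarrow> (real \<Rightarrow> real \<times> real) \<Rightarrow> real" where
  "line_int_du P T g = integral {0..T} (\<lambda>t. P (fst (g t)) (snd (g t)) * fst (vector_derivative g (at t)))"

definition B2tilde :: "real \<Rightarrow> real" where
  "B2tilde h = (let (T, g) = (SOME (T, g). periodic_orbit2 h T g) in
      line_int_du (\<lambda>u v. u^2 * v) T g / line_int_du (\<lambda>u v. v) T g)"

definition c0 :: "real \<Rightarrow> real" where
  "c0 h = 1 / (1 - B2tilde h)"

end

theory Submission
  imports Defs
begin

text \<open>
  Fix 0 < h < 3/4 and let a > 0 be the amplitude, a^2 < 3 and W(a) = h. Writing u = a sin \<theta>,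
  the energy relation gives v = a cos \<theta> q(a, \<theta>) with
  q(a, \<theta>) = sqrt (1 - a^2 (1 + sin^2 \<theta>) / 6), and along the flow \<theta>' = q(a, \<theta>).
  Since du = a cos \<theta> d\<theta>, both line integrals become integrals over one turn of \<theta>:
  B(h) = a^2 \<integral> sin^2 cos^2 q(a, -) / \<integral> cos^2 q(a, -). These integrals depend continuously on a,
  and a \<rightarrow> sqrt 3 as h \<rightarrow> 3/4, where q(sqrt 3, \<theta>) = \<bar>cos \<theta>\<bar> / sqrt 2. The two integrals
  then equal (8/15) / sqrt 2 and (8/3) / sqrt 2, so the limit is 3 / 5.

  The orbit chosen in the definition of B is this one by uniqueness of solutions: energy
  conservation keeps a solution through (0, sqrt (2h)) in the strip u^2 \<le> 3, where the vector
  field satisfies a one-sided Lipschitz condition.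
\<close>

section \<open>Real analysis preliminaries\<close>

text \<open>One of the two integrals below is over an empty or degenerate interval, so this is the
  oriented integral of f from 0 to x.\<close>
definition primitive :: "(real \<Rightarrow> real) \<Rightarrow> real \<Rightarrow> real" where
  "primitive f x = integral {0..x} f - integral {x..0} f"

lemma primitive_0 [simp]: "primitive f 0 = 0"
  by (simp add: primitive_def)

lemma primitive_has_real_derivative:
  assumes f: "continuous_on UNIV f"
  shows "(primitive f has_real_derivative f x) (at x)"
proof -
  define R where "R = \<bar>x\<bar> + 1"
  have int: "f integrable_on {c..d}" for c d
    by (intro integrable_continuous_real continuous_on_subset[OF f]) auto
  have eq: "integral {-R..y} f - integral {-R..0} f = primitive f y" if "y \<in> {-R<..<R}" for y
  proof (cases "0 \<le> y")
    case True
    moreover have "integral {y..0} f = 0"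
      using True by (cases "y = 0") auto
    ultimately show ?thesis
      using Henstock_Kurzweil_Integration.integral_combine[OF _ _ int, of "-R" 0 y] that
      by (simp add: primitive_def)
  next
    case False
    then show ?thesis
      using Henstock_Kurzweil_Integration.integral_combine[OF _ _ int, of "-R" y 0] that
      by (simp add: primitive_def)
  qed
  have "((\<lambda>y. integral {-R..y} f) has_real_derivative f x) (at x within {-R..R})"
    by (intro integral_has_real_derivative continuous_on_subset[OF f]) (auto simp: R_def)
  then have "((\<lambda>y. integral {-R..y} f - integral {-R..0} f) has_real_derivative f x) (at x)"
    by (auto intro!: derivative_eq_intros simp: at_within_Icc_at R_def)
  then show ?thesis
    by (rule has_field_derivative_transform_within_open[OF _ open_greaterThanLessThan _ eq])
       (auto simp: R_def)
qed

lemma primitive_add_period: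
  assumes f: "continuous_on UNIV f" and per: "\<And>x. f (x + p) = f x"
  shows "primitive f (x + p) = primitive f x + primitive f p"
proof -
  have "((\<lambda>x. primitive f (x + p) - primitive f x) has_real_derivative f (y + p) * 1 - f y) (at y)" for y
    by (intro DERIV_diff DERIV_chain2[OF primitive_has_real_derivative[OF f]]
        primitive_has_real_derivative[OF f]) (auto intro!: derivative_eq_intros)
  then have "((\<lambda>x. primitive f (x + p) - primitive f x) has_real_derivative 0) (at y)" for y
    by (simp add: per)
  then have "primitive f (x + p) - primitive f x = primitive f (0 + p) - primitive f 0"
    by (intro DERIV_isconst_all allI)
  then show ?thesis by simp
qed

lemma strict_mono_if_derivative_pos:
  fixes F :: "real \<Rightarrow> real"
  assumes "\<And>x. (F has_real_derivative F' x) (at x)" and "\<And>x. 0 < F' x"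
  shows "strict_mono F"
proof (rule strict_monoI)
  fix x y :: real
  assume "x < y"
  then show "F x < F y"
    by (rule DERIV_pos_imp_increasing) (use assms in blast)
qed

lemma bij_if_derivative_ge_1:
  fixes F :: "real \<Rightarrow> real"
  assumes F: "\<And>x. (F has_real_derivative F' x) (at x)" and ge: "\<And>x. 1 \<le> F' x"
  shows "bij F"
proof (rule bijI)
  show "inj F"
    using strict_mono_if_derivative_pos[OF F] ge
    by (meson less_le_trans zero_less_one strict_mono_imp_inj_on)
  have grow: "x - y \<le> F x - F y" if "y \<le> x" for x y
  proof -
    have "\<And>z. ((\<lambda>x. F x - x) has_real_derivative F' z - 1) (at z)"
      by (intro DERIV_diff F DERIV_ident)
    then have "F y - y \<le> F x - x"
      using DERIV_nonneg_imp_nondecreasing[OF that, of "\<lambda>x. F x - x"] ge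
      by (metis diff_ge_0_iff_ge)
    then show ?thesis by simp
  qed
  have "\<exists>x. F x = t" for t
  proof -
    define c where "c = \<bar>t - F 0\<bar>"
    have "F (- c) \<le> t" "t \<le> F c" "- c \<le> c"
      using grow[of "-c" 0] grow[of 0 c] by (auto simp: c_def)
    moreover have "isCont F x" for x using F by (rule DERIV_isCont)
    ultimately show "\<exists>x. F x = t"
      using IVT[of F "-c" t c] by blast
  qed
  then show "surj F"
    by (metis surj_def)
qed

lemma inv_has_real_derivative:
  fixes F :: "real \<Rightarrow> real"
  assumes F: "\<And>x. (F has_real_derivative F' x) (at x)" and ge: "\<And>x. 1 \<le> F' x"
  shows "(inv F has_real_derivative 1 / F' (inv F t)) (at t)"
proof -
  have bij: "bij F" by (rule bij_if_derivative_ge_1[OF F ge])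
  have inv_F: "inv F (F x) = x" and F_inv: "F (inv F y) = y" for x y
    using bij by (simp_all add: bij_is_inj bij_is_surj surj_f_inv_f)
  have "isCont (inv F) (F (inv F t))"
    by (rule isCont_inverse_function[OF zero_less_one inv_F DERIV_isCont[OF F]])
  then have cont: "isCont (inv F) t"
    by (simp only: F_inv)
  have neq: "F' (inv F t) \<noteq> 0"
    using ge[of "inv F t"] by linarith
  have "(inv F has_real_derivative inverse (F' (inv F t))) (at t)"
    by (rule DERIV_inverse_function[where a="t - 1" and b="t + 1" and g="inv F" and x=t,
          OF F[of "inv F t"] neq])
       (simp_all add: cont F_inv)
  then show ?thesis by (simp add: inverse_eq_divide)
qed

lemma has_vector_derivative_fst:
  "(g has_vector_derivative D) F \<Longrightarrow> ((\<lambda>t. fst (g t)) has_vector_derivative fst D) F"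
  unfolding has_vector_derivative_def by (drule has_derivative_fst) simp

lemma has_vector_derivative_snd:
  "(g has_vector_derivative D) F \<Longrightarrow> ((\<lambda>t. snd (g t)) has_vector_derivative snd D) F"
  unfolding has_vector_derivative_def by (drule has_derivative_snd) simp

lemma ode_solutions_agree_if_one_sided_lipschitz:
  fixes f :: "'a::real_inner \<Rightarrow> 'a" and x y :: "real \<Rightarrow> 'a"
  assumes x: "\<And>s. (x has_vector_derivative f (x s)) (at s)"
    and y: "\<And>s. (y has_vector_derivative f (y s)) (at s)"
    and x_in: "\<And>s. 0 \<le> s \<Longrightarrow> x s \<in> S" and y_in: "\<And>s. 0 \<le> s \<Longrightarrow> y s \<in> S"
    and lip: "\<And>p q. p \<in> S \<Longrightarrow> q \<in> S \<Longrightarrow> inner (p - q) (f p - f q) \<le> L * inner (p - q) (p - q)"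
    and x0: "x 0 = y 0" and t: "0 \<le> t"
  shows "x t = y t"
proof -
  txt \<open>Gronwall: exp (-2 L s) |x s - y s|^2 is nonincreasing.\<close>
  define z where "z s = x s - y s" for s
  define E where "E s = exp (- 2 * L * s) * inner (z s) (z s)" for s
  have dE: "(E has_real_derivative
      exp (- 2 * L * s) * (2 * inner (z s) (f (x s) - f (y s)) - 2 * L * inner (z s) (z s))) (at s)" for s
  proof -
    have "(z has_vector_derivative f (x s) - f (y s)) (at s)"
      unfolding z_def[abs_def] by (rule has_vector_derivative_diff[OF x y])
    from bounded_bilinear.has_vector_derivative[OF bounded_bilinear_inner this this]
    have "((\<lambda>s. inner (z s) (z s)) has_real_derivative 2 * inner (z s) (f (x s) - f (y s))) (at s)"
      by (simp add: has_real_derivative_iff_has_vector_derivative inner_commute)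
    then show ?thesis
      unfolding E_def[abs_def] by (auto intro!: derivative_eq_intros simp: algebra_simps)
  qed
  have "E t \<le> E 0"
  proof (rule DERIV_nonpos_imp_nonincreasing[OF t])
    fix s :: real assume "0 \<le> s" "s \<le> t"
    then have "inner (z s) (f (x s) - f (y s)) \<le> L * inner (z s) (z s)"
      unfolding z_def using lip x_in y_in by blast
    then show "\<exists>D. (E has_real_derivative D) (at s) \<and> D \<le> 0"
      using dE by (intro exI conjI) (auto intro!: mult_nonneg_nonpos)
  qed
  then have "inner (z t) (z t) \<le> 0"
    using x0 by (simp add: E_def z_def zero_le_mult_iff mult_le_0_iff)
  then have "inner (z t) (z t) = 0"
    using inner_ge_zero[of "z t"] by linarith
  then show ?thesis by (simp add: z_def)
qed

section \<open>Solutions of the vector field\<close>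

lemma field2_solution_derivatives:
  assumes "(g has_vector_derivative field2 (g t)) (at t)"
  shows "((\<lambda>t. fst (g t)) has_real_derivative snd (g t)) (at t)"
    and "((\<lambda>t. snd (g t)) has_real_derivative - fst (g t) + (fst (g t))^3 / 3) (at t)"
  using has_vector_derivative_fst[OF assms] has_vector_derivative_snd[OF assms]
  by (simp_all add: field2_def has_real_derivative_iff_has_vector_derivative)

lemma H2_conserved:
  assumes g: "\<And>t. (g has_vector_derivative field2 (g t)) (at t)"
  shows "H2 (fst (g t)) (snd (g t)) = H2 (fst (g 0)) (snd (g 0))"
proof -
  have "((\<lambda>t. H2 (fst (g t)) (snd (g t))) has_real_derivative 0) (at s)" for s
    using field2_solution_derivatives[OF g[of s]] unfolding H2_def W2_def
    by (auto intro!: derivative_eq_intros simp: field_simps power2_eq_square power3_eq_cube)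
  then show ?thesis by (intro DERIV_isconst_all allI)
qed

lemma field2_solution_confined:
  assumes g: "\<And>t. (g has_vector_derivative field2 (g t)) (at t)"
    and g0: "g 0 = (0, sqrt (2 * h))" and h: "0 \<le> h" "h < 3/4" and t: "0 \<le> t"
  shows "(fst (g t))^2 \<le> 3"
proof (rule ccontr)
  txt \<open>On the lines u^2 = 3, through the saddle points, the energy is at least 3/4.\<close>
  assume "\<not> (fst (g t))^2 \<le> 3"
  moreover have "isCont (\<lambda>s. (fst (g s))^2) s" for s
    using field2_solution_derivatives(1)[OF g] by (intro isCont_power DERIV_isCont)
  ultimately obtain s where "(fst (g s))^2 = 3"
    using IVT[of "\<lambda>s. (fst (g s))^2" 0 3 t] g0 t by force
  then have "H2 (fst (g s)) (snd (g s)) = (snd (g s))^2 / 2 + 3/4"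
    by (simp add: H2_def W2_def power4_eq_xxxx power2_eq_square[symmetric])
  moreover have "H2 (fst (g s)) (snd (g s)) = h"
    using H2_conserved[OF g, of s] g0 h by (simp add: H2_def W2_def)
  ultimately show False
    using h zero_le_power2[of "snd (g s)"] by linarith
qed

lemma field2_one_sided_lipschitz:
  assumes p: "(fst p)^2 \<le> 3" and q: "(fst q)^2 \<le> 3"
  shows "inner (p - q) (field2 p - field2 q) \<le> 3/2 * inner (p - q) (p - q)"
proof -
  obtain u1 v1 u2 v2 where pq: "p = (u1, v1)" "q = (u2, v2)" by fastforce
  define m where "m = (u1^2 + u1 * u2 + u2^2) / 3"
  have m: "0 \<le> m" "m \<le> 3"
  proof -
    have "0 \<le> (u1 + u2/2)^2 + 3 * u2^2 / 4" by simp
    also have "\<dots> = u1^2 + u1 * u2 + u2^2" by (simp add: algebra_simps power2_eq_square)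
    finally show "0 \<le> m" by (simp add: m_def)
    have "2 * (u1 * u2) \<le> u1^2 + u2^2" using sum_squares_bound[of u1 u2] by (simp add: power2_eq_square)
    then show "m \<le> 3" using p q pq by (simp add: m_def)
  qed
  have "inner (p - q) (field2 p - field2 q) = m * ((u1 - u2) * (v1 - v2))"
    by (simp add: pq field2_def m_def field_simps power2_eq_square power3_eq_cube)
  also have "\<dots> \<le> m * \<bar>(u1 - u2) * (v1 - v2)\<bar>"
    using m(1) by (intro mult_left_mono) auto
  also have "\<dots> \<le> 3 * \<bar>(u1 - u2) * (v1 - v2)\<bar>"
    using m(2) by (intro mult_right_mono) auto
  also have "\<dots> \<le> 3/2 * ((u1 - u2)^2 + (v1 - v2)^2)"
    using sum_squares_bound[of "\<bar>u1 - u2\<bar>" "\<bar>v1 - v2\<bar>"] by (simp add: abs_mult)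
  also have "\<dots> = 3/2 * inner (p - q) (p - q)"
    by (simp add: pq power2_eq_square)
  finally show ?thesis .
qed

lemma periodic_orbit2_unique:
  assumes o: "periodic_orbit2 h T g" and o': "periodic_orbit2 h T' g'" and h: "0 \<le> h" "h < 3/4"
  shows "0 \<le> t \<Longrightarrow> g t = g' t" and "T = T'"
proof -
  have g: "\<And>t. (g has_vector_derivative field2 (g t)) (at t)" "g 0 = (0, sqrt (2 * h))"
    and g': "\<And>t. (g' has_vector_derivative field2 (g' t)) (at t)" "g' 0 = (0, sqrt (2 * h))"
    using o o' by (simp_all add: periodic_orbit2_def)
  let ?S = "{p. (fst p)^2 \<le> 3}"
  show eq: "g t = g' t" if "0 \<le> t" for t
  proof (rule ode_solutions_agree_if_one_sided_lipschitz[OF g(1) g'(1), where S="?S" and L="3/2"])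
    show "g s \<in> ?S" "g' s \<in> ?S" if "0 \<le> s" for s
      using field2_solution_confined[OF g(1) g(2) h that] field2_solution_confined[OF g'(1) g'(2) h that]
      by simp_all
    show "inner (p - q) (field2 p - field2 q) \<le> 3/2 * inner (p - q) (p - q)" if "p \<in> ?S" "q \<in> ?S" for p q
      using that field2_one_sided_lipschitz by blast
  qed (use g(2) g'(2) that in simp_all)
  have return: "0 < T" "g T = g 0" "\<And>t. 0 < t \<Longrightarrow> t < T \<Longrightarrow> g t \<noteq> g 0"
    and return': "0 < T'" "g' T' = g' 0" "\<And>t. 0 < t \<Longrightarrow> t < T' \<Longrightarrow> g' t \<noteq> g' 0"
    using o o' unfolding periodic_orbit2_def by (metis add_0 greaterThanLessThan_iff)+
  show "T = T'"
  proof (rule ccontr)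
    assume "T \<noteq> T'"
    then consider "T < T'" | "T' < T" by linarith
    then show False
    proof cases
      case 1
      then show False using return'(3)[of T] return(1,2) eq[of T] eq[of 0] by simp
    next
      case 2
      then show False using return(3)[of T'] return'(1,2) eq[of T'] eq[of 0] by simp
    qed
  qed
qed

lemma line_int_du_periodic_orbit2:
  assumes "periodic_orbit2 h T g"
  shows "line_int_du P T g = integral {0..T} (\<lambda>t. P (fst (g t)) (snd (g t)) * snd (g t))"
proof -
  have "vector_derivative g (at t) = field2 (g t)" for t
    using assms unfolding periodic_orbit2_def by (blast intro: vector_derivative_at)
  then show ?thesis by (simp add: line_int_du_def field2_def)
qed

lemma B2tilde_eq_line_int_du_ratio:
  assumes o: "periodic_orbit2 h T g" and h: "0 \<le> h" "h < 3/4"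
  shows "B2tilde h = line_int_du (\<lambda>u v. u^2 * v) T g / line_int_du (\<lambda>u v. v) T g"
proof -
  define p where "p = (SOME (T, g). periodic_orbit2 h T g)"
  have po: "periodic_orbit2 h (fst p) (snd p)"
    using someI[of "\<lambda>(T, g). periodic_orbit2 h T g" "(T, g)"] o by (simp add: p_def case_prod_beta)
  have "line_int_du P (fst p) (snd p) = line_int_du P T g" for P
  proof -
    have "line_int_du P (fst p) (snd p)
        = integral {0..fst p} (\<lambda>t. P (fst (snd p t)) (snd (snd p t)) * snd (snd p t))"
      by (rule line_int_du_periodic_orbit2[OF po])
    also have "\<dots> = integral {0..T} (\<lambda>t. P (fst (g t)) (snd (g t)) * snd (g t))"
      unfolding periodic_orbit2_unique(2)[OF po o h]
      by (rule Henstock_Kurzweil_Integration.integral_cong) (simp add: periodic_orbit2_unique(1)[OF po o h])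
    finally show ?thesis
      by (simp add: line_int_du_periodic_orbit2[OF o])
  qed
  then show ?thesis
    by (simp add: B2tilde_def p_def[symmetric] case_prod_beta)
qed

section \<open>The periodic orbit in angular coordinates\<close>

definition angular_speed :: "real \<Rightarrow> real \<Rightarrow> real" where
  "angular_speed a x = sqrt (1 - a^2 * (1 + (sin x)^2) / 6)"

lemma angular_speed_radicand_pos:
  assumes "(a::real)^2 < 3" shows "0 < 1 - a^2 * (1 + (sin x)^2) / 6"
proof -
  have "a^2 * (1 + (sin x)^2) \<le> a^2 * 2"
    by (intro mult_left_mono) (auto simp: abs_square_le_1)
  then show ?thesis using assms by linarith
qed

lemma angular_speed_pos: "(a::real)^2 < 3 \<Longrightarrow> 0 < angular_speed a x"
  unfolding angular_speed_def using angular_speed_radicand_pos by simp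

lemma angular_speed_le_1: "angular_speed a x \<le> 1"
  unfolding angular_speed_def by simp

lemma angular_speed_squared:
  "(a::real)^2 < 3 \<Longrightarrow> (angular_speed a x)^2 = 1 - a^2 * (1 + (sin x)^2) / 6"
  unfolding angular_speed_def using angular_speed_radicand_pos[of a x] by simp

lemma angular_speed_periodic [simp]: "angular_speed a (x + 2 * pi) = angular_speed a x"
  by (simp add: angular_speed_def)

lemma continuous_on_angular_speed [continuous_intros]:
  "continuous_on S (\<lambda>x. angular_speed a x)"
  unfolding angular_speed_def by (intro continuous_intros) simp

lemma angular_speed_has_real_derivative:
  assumes "(a::real)^2 < 3"
  shows "(angular_speed a has_real_derivative
           - (a^2 * sin x * cos x) / (6 * angular_speed a x)) (at x)"
  unfolding angular_speed_def[abs_def]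
  using angular_speed_radicand_pos[OF assms, of x]
  by (auto intro!: derivative_eq_intros simp: field_simps)

text \<open>On the level set of W2 a, writing u = a sin \<theta> forces v = \<plusminus>a cos \<theta> angular_speed a \<theta>,
  and the vector field then turns \<theta> with speed angular_speed a \<theta>.\<close>
definition orbit_time :: "real \<Rightarrow> real \<Rightarrow> real" where
  "orbit_time a = primitive (\<lambda>x. 1 / angular_speed a x)"

definition orbit_angle :: "real \<Rightarrow> real \<Rightarrow> real" where
  "orbit_angle a = inv (orbit_time a)"

definition orbit_period :: "real \<Rightarrow> real" where
  "orbit_period a = orbit_time a (2 * pi)"

definition orbit :: "real \<Rightarrow> real \<Rightarrow> real \<times> real" where
  "orbit a t = (a * sin (orbit_angle a t),
                a * cos (orbit_angle a t) * angular_speed a (orbit_angle a t))"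

context
  fixes a :: real
  assumes a: "a^2 < 3"
begin

lemma continuous_on_inverse_angular_speed: "continuous_on UNIV (\<lambda>x. 1 / angular_speed a x)"
  using angular_speed_pos[OF a] by (intro continuous_intros) (simp add: less_imp_neq[symmetric])

lemma orbit_time_has_real_derivative:
  "(orbit_time a has_real_derivative 1 / angular_speed a x) (at x)"
  unfolding orbit_time_def by (rule primitive_has_real_derivative[OF continuous_on_inverse_angular_speed])

lemma inverse_angular_speed_ge_1: "1 \<le> 1 / angular_speed a x"
  using angular_speed_pos[OF a, of x] angular_speed_le_1[of a x] by simp

lemma bij_orbit_time: "bij (orbit_time a)"
  by (rule bij_if_derivative_ge_1[OF orbit_time_has_real_derivative inverse_angular_speed_ge_1])

lemma strict_mono_orbit_time: "strict_mono (orbit_time a)"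
  by (rule strict_mono_if_derivative_pos[OF orbit_time_has_real_derivative])
     (simp add: angular_speed_pos[OF a])

lemma orbit_time_angle [simp]: "orbit_time a (orbit_angle a t) = t"
  using bij_orbit_time by (simp add: orbit_angle_def bij_is_surj surj_f_inv_f)

lemma orbit_angle_time [simp]: "orbit_angle a (orbit_time a x) = x"
  using bij_orbit_time by (simp add: orbit_angle_def bij_is_inj)

lemma orbit_angle_0 [simp]: "orbit_angle a 0 = 0"
  using orbit_angle_time[of 0] by (simp add: orbit_time_def)

lemma orbit_angle_period [simp]: "orbit_angle a (orbit_period a) = 2 * pi"
  by (simp add: orbit_period_def)

lemma orbit_angle_less_iff: "orbit_angle a s < orbit_angle a t \<longleftrightarrow> s < t"
  using strict_mono_less[OF strict_mono_orbit_time] by (metis orbit_time_angle)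

lemma orbit_angle_has_real_derivative:
  "(orbit_angle a has_real_derivative angular_speed a (orbit_angle a t)) (at t)"
  using inv_has_real_derivative[OF orbit_time_has_real_derivative inverse_angular_speed_ge_1]
  by (simp add: orbit_angle_def)

lemma orbit_angle_add_period: "orbit_angle a (t + orbit_period a) = orbit_angle a t + 2 * pi"
proof -
  have "orbit_time a (orbit_angle a t + 2 * pi) = orbit_time a (orbit_angle a t) + orbit_period a"
    unfolding orbit_time_def orbit_period_def
    by (rule primitive_add_period[OF continuous_on_inverse_angular_speed]) simp
  then show ?thesis by (metis orbit_angle_time orbit_time_angle)
qed

lemma orbit_period_pos: "0 < orbit_period a"
  using strict_mono_less[OF strict_mono_orbit_time, of 0 "2 * pi"]
  by (simp add: orbit_period_def orbit_time_def)

lemma orbit_has_vector_derivative: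
  "(orbit a has_vector_derivative field2 (orbit a t)) (at t)"
proof -
  let ?x = "orbit_angle a t"
  let ?S = "sin ?x" and ?C = "cos ?x" and ?Q = "angular_speed a ?x"
  have Q: "?Q \<noteq> 0" "?Q^2 = 1 - a^2 * (1 + ?S^2) / 6"
    using angular_speed_pos[OF a] angular_speed_squared[OF a] by (auto simp: less_imp_neq[symmetric])
  have du: "((\<lambda>t. a * sin (orbit_angle a t)) has_real_derivative a * (?C * ?Q)) (at t)"
    by (intro DERIV_cmult DERIV_chain2[OF DERIV_sin orbit_angle_has_real_derivative])
  have "((\<lambda>t. a * cos (orbit_angle a t) * angular_speed a (orbit_angle a t)) has_real_derivative
          a * (- ?S * ?Q) * ?Q + - (a^2 * ?S * ?C) / (6 * ?Q) * ?Q * (a * ?C)) (at t)"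
    by (intro DERIV_mult DERIV_cmult DERIV_chain2[OF DERIV_cos orbit_angle_has_real_derivative]
        DERIV_chain2[OF angular_speed_has_real_derivative[OF a] orbit_angle_has_real_derivative])
  moreover have "a * (- ?S * ?Q) * ?Q + - (a^2 * ?S * ?C) / (6 * ?Q) * ?Q * (a * ?C)
      = - (a * ?S) + (a * ?S)^3 / 3"
  proof -
    have "a * (- ?S * ?Q) * ?Q + - (a^2 * ?S * ?C) / (6 * ?Q) * ?Q * (a * ?C)
        = - a * ?S * ?Q^2 - a^3 * ?S * ?C^2 / 6"
      using Q(1) by (simp add: field_simps power2_eq_square power3_eq_cube)
    also have "\<dots> = - (a * ?S) + (a * ?S)^3 / 3"
      unfolding Q(2) cos_squared_eq by (simp add: field_simps power2_eq_square power3_eq_cube)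
    finally show ?thesis .
  qed
  ultimately have dv: "((\<lambda>t. a * cos (orbit_angle a t) * angular_speed a (orbit_angle a t))
      has_real_derivative - (a * ?S) + (a * ?S)^3 / 3) (at t)"
    by (rule DERIV_cong)
  have "((\<lambda>t. (a * sin (orbit_angle a t), a * cos (orbit_angle a t) * angular_speed a (orbit_angle a t)))
      has_vector_derivative (a * (?C * ?Q), - (a * ?S) + (a * ?S)^3 / 3)) (at t)"
    using du dv
    by (intro has_vector_derivative_Pair) (simp_all add: has_real_derivative_iff_has_vector_derivative)
  moreover have "field2 (orbit a t) = (a * (?C * ?Q), - (a * ?S) + (a * ?S)^3 / 3)"
    by (simp add: field2_def orbit_def)
  moreover have "orbit a = (\<lambda>t. (a * sin (orbit_angle a t),
      a * cos (orbit_angle a t) * angular_speed a (orbit_angle a t)))"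
    by (simp add: fun_eq_iff orbit_def)
  ultimately show ?thesis by simp
qed

lemma orbit_0:
  assumes "0 < a" shows "orbit a 0 = (0, sqrt (2 * W2 a))"
proof -
  have "a * angular_speed a 0 = sqrt (a^2 * (1 - a^2 / 6))"
    using assms by (simp add: angular_speed_def real_sqrt_mult)
  also have "a^2 * (1 - a^2 / 6) = 2 * W2 a"
    by (simp add: W2_def field_simps power2_eq_square power4_eq_xxxx)
  finally show ?thesis by (simp add: orbit_def)
qed

lemma orbit_add_period: "orbit a (t + orbit_period a) = orbit a t"
  by (simp add: orbit_def orbit_angle_add_period)

lemma orbit_first_return:
  assumes "0 < a" and t: "0 < t" "t < orbit_period a"
  shows "orbit a t \<noteq> orbit a 0"
proof
  assume eq: "orbit a t = orbit a 0"
  let ?x = "orbit_angle a t"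
  have x: "0 < ?x" "?x < 2 * pi"
    using orbit_angle_less_iff[of 0 t] orbit_angle_less_iff[of t "orbit_period a"] t by auto
  have "sin ?x = 0"
    using eq assms(1) by (simp add: orbit_def)
  then have "angular_speed a ?x = angular_speed a 0"
    by (simp add: angular_speed_def)
  then have "cos ?x = 1"
    using eq assms(1) angular_speed_pos[OF a, of 0] by (simp add: orbit_def)
  then obtain n :: int where n: "?x = of_int n * 2 * pi"
    using cos_one_2pi_int by blast
  then have "0 < of_int n * (2 * pi)" "of_int n * (2 * pi) < 1 * (2 * pi)"
    using x by (simp_all add: mult.assoc)
  then have "0 < n" "n < 1"
    by (simp_all add: zero_less_mult_iff del: of_int_mult)
  then show False by simp
qed

lemma periodic_orbit2_orbit:
  assumes "0 < a" shows "periodic_orbit2 (W2 a) (orbit_period a) (orbit a)"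
  unfolding periodic_orbit2_def
  using orbit_period_pos orbit_0[OF assms] orbit_has_vector_derivative orbit_add_period
    orbit_first_return[OF assms] by auto

lemma line_int_du_orbit:
  assumes P: "continuous_on UNIV (\<lambda>(u, v). P u v)"
  shows "line_int_du P (orbit_period a) (orbit a)
    = integral {0..2 * pi} (\<lambda>x. P (a * sin x) (a * cos x * angular_speed a x) * (a * cos x))"
proof -
  define G where "G x = P (a * sin x) (a * cos x * angular_speed a x) * (a * cos x)" for x
  have "continuous_on UNIV (\<lambda>x. (a * sin x, a * cos x * angular_speed a x))"
    by (intro continuous_intros)
  from continuous_on_compose2[OF P this]
  have "continuous_on UNIV (\<lambda>x. P (a * sin x) (a * cos x * angular_speed a x))"
    by simp
  then have G: "continuous_on {0..2 * pi} G"
    unfolding G_def by (auto intro!: continuous_intros intro: continuous_on_subset)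
  have img: "orbit_angle a ` {0..orbit_period a} \<subseteq> {0..2 * pi}"
  proof (rule image_subsetI)
    fix t assume "t \<in> {0..orbit_period a}"
    then have "\<not> orbit_angle a t < orbit_angle a 0" "\<not> orbit_angle a (orbit_period a) < orbit_angle a t"
      unfolding orbit_angle_less_iff by simp_all
    then show "orbit_angle a t \<in> {0..2 * pi}" by simp
  qed
  have "((\<lambda>t. angular_speed a (orbit_angle a t) *\<^sub>R G (orbit_angle a t)) has_integral
      integral {orbit_angle a 0..orbit_angle a (orbit_period a)} G) {0..orbit_period a}"
    by (rule has_integral_substitution[OF _ _ img G])
       (use orbit_period_pos in \<open>auto intro: has_field_derivative_at_within orbit_angle_has_real_derivative\<close>)
  then have subst: "integral {0..orbit_period a} (\<lambda>t. angular_speed a (orbit_angle a t) * G (orbit_angle a t))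
      = integral {0..2 * pi} G"
    by (simp add: integral_unique)
  have "vector_derivative (orbit a) (at t) = field2 (orbit a t)" for t
    by (rule vector_derivative_at[OF orbit_has_vector_derivative])
  then have "line_int_du P (orbit_period a) (orbit a)
      = integral {0..orbit_period a} (\<lambda>t. angular_speed a (orbit_angle a t) * G (orbit_angle a t))"
    unfolding line_int_du_def
    by (intro Henstock_Kurzweil_Integration.integral_cong) (simp add: field2_def orbit_def G_def mult_ac)
  also note subst
  finally show ?thesis
    unfolding G_def .
qed

end

lemma W2_bounds: assumes "(a::real)^2 < 3" shows "0 \<le> W2 a" "W2 a < 3/4"
proof -
  have "W2 a = a^2 * (6 - a^2) / 12"
    by (simp add: W2_def field_simps power2_eq_square power4_eq_xxxx)
  moreover have "0 \<le> a^2 * (6 - a^2) / 12"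
    using assms by (intro divide_nonneg_pos mult_nonneg_nonneg) auto
  ultimately show "0 \<le> W2 a"
    by simp
  have "3/4 - W2 a = (a^2 - 3)^2 / 12"
    by (simp add: W2_def field_simps power2_eq_square power4_eq_xxxx)
  moreover have "0 < (a^2 - 3)^2"
    using assms by simp
  ultimately show "W2 a < 3/4"
    by linarith
qed

definition orbit_moment :: "(real \<Rightarrow> real) \<Rightarrow> real \<Rightarrow> real" where
  "orbit_moment w a = integral {0..2 * pi} (\<lambda>x. w x * angular_speed a x)"

definition moment_ratio :: "real \<Rightarrow> real" where
  "moment_ratio a = a^2 * orbit_moment (\<lambda>x. (sin x)^2 * (cos x)^2) a / orbit_moment (\<lambda>x. (cos x)^2) a"

lemma B2tilde_W2:
  assumes "0 < a" "a^2 < 3"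
  shows "B2tilde (W2 a) = moment_ratio a"
proof -
  have "B2tilde (W2 a) = line_int_du (\<lambda>u v. u^2 * v) (orbit_period a) (orbit a) /
      line_int_du (\<lambda>u v. v) (orbit_period a) (orbit a)"
    using B2tilde_eq_line_int_du_ratio[OF periodic_orbit2_orbit[OF assms(2,1)] W2_bounds[OF assms(2)]] .
  also have "\<dots> = (a^2 * a^2 * orbit_moment (\<lambda>x. (sin x)^2 * (cos x)^2) a) /
      (a^2 * orbit_moment (\<lambda>x. (cos x)^2) a)"
  proof -
    have "line_int_du (\<lambda>u v. u^2 * v) (orbit_period a) (orbit a)
        = integral {0..2 * pi} (\<lambda>x. (a^2 * a^2) * ((sin x)^2 * (cos x)^2 * angular_speed a x))"
      by (subst line_int_du_orbit[OF assms(2)])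
         (simp_all add: split_beta continuous_intros power2_eq_square mult_ac)
    moreover have "line_int_du (\<lambda>u v. v) (orbit_period a) (orbit a)
        = integral {0..2 * pi} (\<lambda>x. a^2 * ((cos x)^2 * angular_speed a x))"
      by (subst line_int_du_orbit[OF assms(2)])
         (simp_all add: split_beta continuous_intros power2_eq_square mult_ac)
    ultimately show ?thesis
      by (simp only: integral_mult_right orbit_moment_def)
  qed
  also have "\<dots> = moment_ratio a"
    unfolding moment_ratio_def
    using assms(1) by (subst mult.assoc, subst mult_divide_mult_cancel_left) simp_all
  finally show ?thesis .
qed

section \<open>The limit at the separatrix level\<close>

definition amplitude :: "real \<Rightarrow> real" where
  "amplitude h = sqrt (3 - sqrt (9 - 12 * h))"

lemma
  assumes "0 < h" "h < 3/4"
  shows amplitude_pos: "0 < amplitude h"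
    and amplitude_squared_less_3: "(amplitude h)^2 < 3"
    and W2_amplitude: "W2 (amplitude h) = h"
proof -
  have "sqrt (9 - 12 * h) < sqrt (3^2)" "0 < sqrt (9 - 12 * h)"
    using assms by (simp_all only: real_sqrt_less_iff real_sqrt_gt_zero) simp_all
  then have r: "0 < sqrt (9 - 12 * h)" "sqrt (9 - 12 * h) < 3"
    by simp_all
  then show "0 < amplitude h" "(amplitude h)^2 < 3"
    by (simp_all add: amplitude_def)
  have "(sqrt (9 - 12 * h))^2 = 9 - 12 * h"
    using assms by simp
  moreover have "(amplitude h)^4 = ((amplitude h)^2)^2" by simp
  ultimately show "W2 (amplitude h) = h"
    using r by (simp add: W2_def amplitude_def power2_eq_square algebra_simps)
qed

lemma tendsto_amplitude: "(amplitude \<longlongrightarrow> sqrt 3) (at_left (3/4))"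
proof -
  have "((\<lambda>h. sqrt (3 - sqrt (9 - 12 * h))) \<longlongrightarrow> sqrt (3 - sqrt (9 - 12 * (3/4)))) (at_left (3/4))"
    by (intro tendsto_intros)
  then show ?thesis
    by (simp add: amplitude_def[abs_def])
qed

lemma isCont_orbit_moment:
  assumes "continuous_on UNIV w"
  shows "isCont (orbit_moment w) a"
proof -
  have "continuous_on (UNIV \<times> cbox 0 (2 * pi)) (\<lambda>(a, x). w x * angular_speed a x)"
    unfolding angular_speed_def split_beta
    by (intro continuous_intros continuous_on_compose2[OF assms]) auto
  then have "continuous_on UNIV (orbit_moment w)"
    unfolding orbit_moment_def using integral_continuous_on_param by (fastforce simp: cbox_interval)
  then show ?thesis
    by (simp add: continuous_on_eq_continuous_at)
qed

lemma angular_speed_sqrt3: "angular_speed (sqrt 3) x = \<bar>cos x\<bar> / sqrt 2"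
proof -
  have "1 - (sqrt 3)^2 * (1 + (sin x)^2) / 6 = (cos x)^2 / 2"
    by (simp add: cos_squared_eq field_simps)
  then show ?thesis
    unfolding angular_speed_def by (simp only:) (simp add: real_sqrt_divide)
qed

lemma has_integral_sin_abs_cos:
  fixes P G :: "real \<Rightarrow> real"
  assumes P: "\<And>s. (P has_real_derivative G s) (at s)"
  shows "((\<lambda>x. G (sin x) * \<bar>cos x\<bar>) has_integral 2 * (P 1 - P (-1))) {0..2 * pi}"
proof -
  have piece: "((\<lambda>x. G (sin x) * \<bar>cos x\<bar>) has_integral c * P (sin r) - c * P (sin l)) {l..r}"
    if "l \<le> r" and sign: "\<And>x. x \<in> {l..r} \<Longrightarrow> \<bar>cos x\<bar> = c * cos x" for l r c
  proof -
    have "((\<lambda>x. c * P (sin x)) has_vector_derivative G (sin x) * \<bar>cos x\<bar>) (at x within {l..r})"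
      if "x \<in> {l..r}" for x
    proof -
      have "((\<lambda>x. c * P (sin x)) has_real_derivative c * (G (sin x) * cos x)) (at x)"
        by (intro DERIV_cmult DERIV_chain2[OF P DERIV_sin])
      moreover have "c * (G (sin x) * cos x) = G (sin x) * \<bar>cos x\<bar>"
        using sign[OF that] by simp
      ultimately show ?thesis
        by (simp add: has_real_derivative_iff_has_vector_derivative[symmetric] has_field_derivative_at_within)
    qed
    from fundamental_theorem_of_calculus[OF \<open>l \<le> r\<close> this]
    show ?thesis by simp
  qed
  have sin_3pi2: "sin (3 * pi / 2) = -1"
    using sin_periodic_pi[of "pi/2"] by (simp add: field_simps)
  have I1: "((\<lambda>x. G (sin x) * \<bar>cos x\<bar>) has_integral P 1 - P 0) {0..pi/2}"
    using piece[of 0 "pi/2" 1] cos_ge_zero by simp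
  have I2: "((\<lambda>x. G (sin x) * \<bar>cos x\<bar>) has_integral P 1 - P (-1)) {pi/2..3 * pi/2}"
  proof -
    have "\<bar>cos x\<bar> = -1 * cos x" if "x \<in> {pi/2..3 * pi/2}" for x
      using cos_ge_zero[of "x - pi"] that by (simp add: cos_diff)
    then show ?thesis using piece[of "pi/2" "3 * pi/2" "-1"] sin_3pi2 by simp
  qed
  have I3: "((\<lambda>x. G (sin x) * \<bar>cos x\<bar>) has_integral P 0 - P (-1)) {3 * pi/2..2 * pi}"
  proof -
    have "\<bar>cos x\<bar> = 1 * cos x" if "x \<in> {3 * pi/2..2 * pi}" for x
      using cos_ge_zero[of "x - 2 * pi"] that by (simp add: cos_diff)
    then show ?thesis using piece[of "3 * pi/2" "2 * pi" 1] sin_3pi2 by simp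
  qed
  have "((\<lambda>x. G (sin x) * \<bar>cos x\<bar>) has_integral
      (P 1 - P 0) + (P 1 - P (-1)) + (P 0 - P (-1))) {0..2 * pi}"
    using pi_gt_zero
    by (intro has_integral_combine[OF _ _ has_integral_combine[OF _ _ I1 I2] I3]) simp_all
  then show ?thesis by (simp add: algebra_simps)
qed

lemma orbit_moment_sqrt3:
  assumes "\<And>s. (P has_real_derivative G s) (at s)"
  shows "orbit_moment (\<lambda>x. G (sin x)) (sqrt 3) = 2 * (P 1 - P (-1)) / sqrt 2"
  using has_integral_sin_abs_cos[OF assms]
  by (simp add: orbit_moment_def angular_speed_sqrt3 integral_divide integral_unique)

lemma orbit_moment_cos2_sqrt3: "orbit_moment (\<lambda>x. (cos x)^2) (sqrt 3) = 8/3 / sqrt 2"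
proof -
  have "orbit_moment (\<lambda>x. (cos x)^2) (sqrt 3) = orbit_moment (\<lambda>x. 1 - (sin x)^2) (sqrt 3)"
    by (simp add: cos_squared_eq)
  also have "\<dots> = 2 * ((1 - 1^3/3) - (-1 - (-1)^3/3)) / sqrt 2"
    by (rule orbit_moment_sqrt3[where P="\<lambda>s. s - s^3/3"]) (auto intro!: derivative_eq_intros)
  finally show ?thesis by simp
qed

lemma orbit_moment_sin2_cos2_sqrt3:
  "orbit_moment (\<lambda>x. (sin x)^2 * (cos x)^2) (sqrt 3) = 8/15 / sqrt 2"
proof -
  have "orbit_moment (\<lambda>x. (sin x)^2 * (cos x)^2) (sqrt 3)
      = orbit_moment (\<lambda>x. (sin x)^2 - (sin x)^4) (sqrt 3)"
    unfolding cos_squared_eq by (simp add: algebra_simps power2_eq_square power4_eq_xxxx)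
  also have "\<dots> = 2 * ((1^3/3 - 1^5/5) - ((-1)^3/3 - (-1)^5/5)) / sqrt 2"
    by (rule orbit_moment_sqrt3[where P="\<lambda>s. s^3/3 - s^5/5"])
       (auto intro!: derivative_eq_intros simp: power2_eq_square power4_eq_xxxx)
  finally show ?thesis by simp
qed

lemma moment_ratio_sqrt3: "moment_ratio (sqrt 3) = 3/5"
  by (simp add: moment_ratio_def orbit_moment_cos2_sqrt3 orbit_moment_sin2_cos2_sqrt3)

lemma isCont_moment_ratio_sqrt3: "isCont moment_ratio (sqrt 3)"
  unfolding moment_ratio_def[abs_def] using orbit_moment_cos2_sqrt3
  by (intro continuous_intros isCont_orbit_moment) auto

theorem mainTheorem7:
  shows "(B2tilde \<longlongrightarrow> 3/5) (at_left (3/4)) \<and> (c0 \<longlongrightarrow> 5/2) (at_left (3/4))"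
proof -
  have "\<forall>\<^sub>F h in at_left (3/4). h \<in> {0<..<3/4 :: real}"
    by (rule eventually_at_left_real) simp
  then have "\<forall>\<^sub>F h in at_left (3/4). moment_ratio (amplitude h) = B2tilde h"
    by eventually_elim (metis B2tilde_W2 amplitude_pos amplitude_squared_less_3 W2_amplitude
        greaterThanLessThan_iff)
  moreover have "((\<lambda>h. moment_ratio (amplitude h)) \<longlongrightarrow> 3/5) (at_left (3/4))"
    using isCont_tendsto_compose[OF isCont_moment_ratio_sqrt3 tendsto_amplitude]
    by (simp add: moment_ratio_sqrt3)
  ultimately have B: "(B2tilde \<longlongrightarrow> 3/5) (at_left (3/4))"
    by (rule Lim_transform_eventually[rotated])
  then have "((\<lambda>h. 1 / (1 - B2tilde h)) \<longlongrightarrow> 1 / (1 - 3/5)) (at_left (3/4))"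
    by (intro tendsto_intros) simp_all
  then show ?thesis
    using B by (simp add: c0_def[abs_def])
qed

end
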